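(* Let $0<\nu\le1$ and $\tilde f(\xi)=\sum_{j\ge0}(j!)^{-1/\nu}|\xi|^j$ for $\xi\in\mathbb{R}^n$. Then for $\xi,\eta\in\mathbb{R}^n$: (A.9) $\tilde f(\xi)\le\tilde f(\xi-\eta)\tilde f(\eta)$ for all $\xi,\eta$; (A.10) $\tilde f(\xi)\le\tilde f(\xi-\eta)\exp(|\eta|^\nu)$ for $|\xi|\wedge|\eta|\le|\xi-\eta|$; (A.11) $(\tilde f(\eta)-\tilde f(\xi))|\eta|^{1-\nu}\le|\xi-\eta|\tilde f(\eta)$ for $|\xi|\le|\eta|$; (A.12) $|\tilde f(\xi)-\tilde f(\eta)||\eta|^{1-\nu}\le|\xi-\eta|^{1-\nu}\tilde f(\xi-\eta)\tilde f(\eta)$ for all $\xi,\eta$; (A.13) $|\tilde f(\xi)-\tilde f(\eta)||\eta|^{1-\nu}\le|\xi-\eta|^{1-\nu}(\exp(|\xi-\eta|^\nu)-1)\tilde f(\eta)$ for $|\xi|\wedge|\xi-\eta|\le|\eta|$; (A.14) $|\tilde f(\xi)-\tilde f(\eta)||\eta|^{1-\nu}\le C|\xi-\eta|^{1-\nu}(\tilde f(\xi-\eta)-1)\exp(|\eta|^\nu)$ for $|\xi|\wedge|\eta|\le|\xi-\eta|$, where one can take $C=1$ except in the region $|\xi|\le|\xi-\eta|\le|\eta|$, where $C=2^{1-\nu}$. Moreover, the function $\xi\mapsto\tilde f(\xi)\vee\tilde f(1)$ satisfies the same estimates (A.9)–(A.14) as $\tilde f$ (with $\tilde f$ replaced by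 it throughout).
   Context: $a\vee b=\max(a,b)$, $a\wedge b=\min(a,b)$; $\tilde f(1)$ denotes the value at $|\xi|=1$. *)

theory Defs
  imports "HOL-Analysis.Analysis"
begin

definition ftr :: "real \<Rightarrow> real \<Rightarrow> real" where
  "ftr nu r = (\<Sum>j. (fact j) powr (- 1 / nu) * r ^ j)"

definition ftilde :: "real \<Rightarrow> real ^ 'n \<Rightarrow> real" where
  "ftilde nu xi = ftr nu (norm xi)"

text \<open>Real power with the usual convention x^0 = 1 (also for x = 0);
  Isabelle's powr has 0 powr a = 0 for all a.\<close>
definition rpow :: "real \<Rightarrow> real \<Rightarrow> real" where
  "rpow x a = (if a = 0 then 1 else x powr a)"

definition A_estimates :: "real \<Rightarrow> (real ^ 'n \<Rightarrow> real) \<Rightarrow> bool" where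
  "A_estimates nu F \<longleftrightarrow>
     (\<forall>xi eta. F xi \<le> F (xi - eta) * F eta) \<and>
     (\<forall>xi eta. min (norm xi) (norm eta) \<le> norm (xi - eta) \<longrightarrow>
        F xi \<le> F (xi - eta) * exp (norm eta powr nu)) \<and>
     (\<forall>xi eta. norm xi \<le> norm eta \<longrightarrow>
        (F eta - F xi) * rpow (norm eta) (1 - nu) \<le> norm (xi - eta) * F eta) \<and>
     (\<forall>xi eta. \<bar>F xi - F eta\<bar> * rpow (norm eta) (1 - nu)
        \<le> rpow (norm (xi - eta)) (1 - nu) * F (xi - eta) * F eta) \<and>
     (\<forall>xi eta. min (norm xi) (norm (xi - eta)) \<le> norm eta \<longrightarrow>
        \<bar>F xi - F eta\<bar> * rpow (norm eta) (1 - nu)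
        \<le> rpow (norm (xi - eta)) (1 - nu) * (exp (norm (xi - eta) powr nu) - 1) * F eta) \<and>
     (\<forall>xi eta. min (norm xi) (norm eta) \<le> norm (xi - eta) \<longrightarrow>
        \<bar>F xi - F eta\<bar> * rpow (norm eta) (1 - nu)
        \<le> (if norm xi \<le> norm (xi - eta) \<and> norm (xi - eta) \<le> norm eta
            then 2 powr (1 - nu) else 1)
           * rpow (norm (xi - eta)) (1 - nu) * (F (xi - eta) - 1) * exp (norm eta powr nu))"

end

theory Submission
  imports Defs
begin

text \<open>
  Write g = ftr nu, the power series with coefficients (n!) powr (-1/nu). All estimates are
  proved for the truncated profiles r \<mapsto> g (max r th) with th \<ge> 0, in the radial variables
  a = |xi|, b = |eta|, c = |xi - eta|, of which only the triangle inequalities are used;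
  th = 0 gives ftilde nu and, g being increasing, th = 1 gives max (ftilde nu xi) (g 1).

  The one-dimensional estimates come from the binomial expansion of g (x + y) - g x into the
  terms (n!) powr (-1/nu) * (n choose i) * x^i * y^(n-i) with i < n. After taking logarithms,
  convexity of exp bounds each weighted term by a convex combination (1 - nu) P + nu Q of
  products of terms of the series of g and of exp (r powr nu) = \<Sum>m. r powr (nu m) / m!;
  the inputs are elementary inequalities for binomial coefficients, above all
  (n choose i) \<ge> 1, which also makes g submultiplicative. The double sums of P and Q are
  dominated by Cauchy products, hence by products of the two series.
\<close>

section \<open>Exponentials, logarithms of factorials and real powers\<close>

lemma exp_le_convex_combination:
  fixes t W X U V :: real
  assumes "0 \<le> t" "t \<le> 1" "X \<le> W + (1 - t) * U + t * V"
  shows "exp X \<le> exp W * ((1 - t) * exp U + t * exp V)"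
proof -
  have "exp X \<le> exp W * exp ((1 - t) * U + t * V)"
    using assms(3) by (simp add: add.assoc flip: exp_add)
  also have "\<dots> \<le> exp W * ((1 - t) * exp U + t * exp V)"
    using convex_onD[OF exp_convex, of t U V] assms(1,2) by simp
  finally show ?thesis .
qed

lemma power_eq_exp_ln: "0 < x \<Longrightarrow> x ^ n = exp (real n * ln x)"
  by (simp add: exp_of_nat_mult)

lemma power_Suc_diff_le:
  fixes x y :: real
  assumes x: "0 \<le> x" and xy: "x \<le> y"
  shows "y ^ Suc j - x ^ Suc j \<le> (y - x) * (real (Suc j) * y ^ j)"
proof -
  have "y ^ Suc j - x ^ Suc j = (y - x) * (\<Sum>p<Suc j. y ^ p * x ^ (j - p))"
    by (rule diff_power_eq_sum)
  also have "\<dots> \<le> (y - x) * (\<Sum>p<Suc j. y ^ j)"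
  proof (intro mult_left_mono sum_mono)
    fix p assume "p \<in> {..<Suc j}"
    then have "y ^ p * x ^ (j - p) \<le> y ^ p * y ^ (j - p)"
      using x xy by (intro mult_left_mono power_mono) auto
    also have "\<dots> = y ^ j" using \<open>p \<in> {..<Suc j}\<close> by (simp flip: power_add)
    finally show "y ^ p * x ^ (j - p) \<le> y ^ j" .
  qed (use xy in simp)
  finally show ?thesis by simp
qed

definition ln_fact :: "nat \<Rightarrow> real" where
  "ln_fact n = ln (fact n)"

lemma ln_fact_Suc: "ln_fact (Suc n) = ln (real (Suc n)) + ln_fact n"
  by (simp add: ln_fact_def ln_mult del: of_nat_Suc)

lemma binomial_eq_exp_ln_fact:
  assumes "i \<le> n"
  shows "real (n choose i) = exp (ln_fact n - ln_fact i - ln_fact (n - i))"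
proof -
  have pos: "real (n choose i) > 0" using assms by simp
  have "fact i * fact (n - i) * real (n choose i) = (fact n :: real)"
    using binomial_fact_lemma[OF assms] by (metis of_nat_fact of_nat_mult)
  then have "ln_fact n = ln_fact i + ln_fact (n - i) + ln (real (n choose i))"
    using pos by (simp add: ln_fact_def ln_mult flip: \<open>_ = fact n\<close>)
  then show ?thesis using pos by simp
qed

lemma ln_Suc_le_ln_binomial:
  "ln (real (Suc i)) \<le> ln_fact (i + Suc j) - ln_fact i - ln_fact (Suc j)"
proof -
  have "Suc i choose i \<le> (i + Suc j) choose i"
    by (rule binomial_right_mono) simp
  then have "ln (real (Suc i)) \<le> ln (real ((i + Suc j) choose i))"
    by simp
  also have "\<dots> = ln_fact (i + Suc j) - ln_fact i - ln_fact (Suc j)"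
    by (simp add: binomial_eq_exp_ln_fact)
  finally show ?thesis .
qed

lemma rpow_nonneg: "0 \<le> rpow x a"
  by (simp add: rpow_def)

lemma rpow_pos: "0 < x \<Longrightarrow> 0 < rpow x a"
  by (simp add: rpow_def)

lemma rpow_eq_exp_ln: "0 < x \<Longrightarrow> rpow x a = exp (a * ln x)"
  by (simp add: rpow_def powr_def)

lemma rpow_mono: "0 \<le> a \<Longrightarrow> 0 \<le> x \<Longrightarrow> x \<le> y \<Longrightarrow> rpow x a \<le> rpow y a"
  by (simp add: rpow_def powr_mono2)

lemma rpow_mult_powr:
  assumes "0 < nu" "0 \<le> c"
  shows "rpow c (1 - nu) * c powr nu = c"
proof (cases "c = 0")
  case False
  with assms have "rpow c (1 - nu) * c powr nu = c powr ((1 - nu) + nu)"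
    by (simp add: rpow_def flip: powr_add)
  then show ?thesis using False assms by simp
qed (use assms in simp)

lemma le_rpow_mult_exp_powr_minus_1:
  assumes "0 < nu" "0 \<le> c"
  shows "c \<le> rpow c (1 - nu) * (exp (c powr nu) - 1)"
proof -
  have "c = rpow c (1 - nu) * c powr nu"
    using rpow_mult_powr[OF assms] by simp
  also have "\<dots> \<le> rpow c (1 - nu) * (exp (c powr nu) - 1)"
    using exp_ge_add_one_self[of "c powr nu"] by (intro mult_left_mono rpow_nonneg) linarith
  finally show ?thesis .
qed

section \<open>Cauchy products of nonnegative series\<close>

lemma sum_pairs_le_suminf_mult:
  fixes U V :: "nat \<Rightarrow> real"
  assumes "\<And>i. 0 \<le> U i" "\<And>j. 0 \<le> V j" "summable U" "summable V" "finite P"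
  shows "(\<Sum>(i, j)\<in>P. U i * V j) \<le> suminf U * suminf V"
proof -
  define M where "M = Suc (Max (fst ` P \<union> snd ` P))"
  have "P \<subseteq> {..<M} \<times> {..<M}"
    using assms(5) by (auto simp: M_def less_Suc_eq_le intro!: Max_ge rev_image_eqI)
  then have "(\<Sum>(i, j)\<in>P. U i * V j) \<le> (\<Sum>(i, j)\<in>{..<M} \<times> {..<M}. U i * V j)"
    using assms by (intro sum_mono2) (auto intro!: mult_nonneg_nonneg)
  also have "\<dots> = (\<Sum>i<M. U i) * (\<Sum>j<M. V j)"
    by (simp add: sum_product sum.cartesian_product)
  also have "\<dots> \<le> suminf U * suminf V"
    using assms by (intro mult_mono sum_le_suminf suminf_nonneg sum_nonneg) auto
  finally show ?thesis .
qed

lemma triangle_sum_le_suminf_mult: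
  fixes U V :: "nat \<Rightarrow> real" and f g :: "nat \<Rightarrow> nat \<Rightarrow> nat"
  assumes "\<And>i. 0 \<le> U i" "\<And>j. 0 \<le> V j" "summable U" "summable V"
    and inj: "inj_on (\<lambda>(n, i). (f n i, g n i)) {(n, i). i < n}"
    and F: "\<And>n i. i < n \<Longrightarrow> F n i = U (f n i) * V (g n i)"
  shows "(\<Sum>n<N. \<Sum>i<n. F n i) \<le> suminf U * suminf V"
proof -
  let ?T = "SIGMA n:{..<N}. {..<n}"
  have inj_T: "inj_on (\<lambda>(n, i). (f n i, g n i)) ?T"
    by (rule inj_on_subset[OF inj]) auto
  have "(\<Sum>n<N. \<Sum>i<n. F n i) = (\<Sum>n<N. \<Sum>i<n. U (f n i) * V (g n i))"
    by (intro sum.cong) (auto simp: F)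
  also have "\<dots> = (\<Sum>(n, i)\<in>?T. U (f n i) * V (g n i))"
    by (simp add: sum.Sigma)
  also have "\<dots> = (\<Sum>(i, j)\<in>(\<lambda>(n, i). (f n i, g n i)) ` ?T. U i * V j)"
    by (rule sum.reindex_cong[OF inj_T refl, symmetric]) auto
  also have "\<dots> \<le> suminf U * suminf V"
    using assms(1-4) by (intro sum_pairs_le_suminf_mult) auto
  finally show ?thesis .
qed

section \<open>The radial profile\<close>

definition ftr_coeff :: "real \<Rightarrow> nat \<Rightarrow> real" where
  "ftr_coeff nu n = fact n powr (- 1 / nu)"

definition ftr_term :: "real \<Rightarrow> real \<Rightarrow> nat \<Rightarrow> real" where
  "ftr_term nu x n = ftr_coeff nu n * x ^ n"

definition exp_powr_term :: "real \<Rightarrow> real \<Rightarrow> nat \<Rightarrow> real" where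
  "exp_powr_term nu y m = (y powr nu) ^ m / fact m"

lemma ftr_eq_suminf: "ftr nu x = suminf (ftr_term nu x)"
  unfolding ftr_def ftr_term_def[abs_def] ftr_coeff_def ..

lemma ftr_term_0 [simp]: "ftr_term nu x 0 = 1"
  by (simp add: ftr_term_def ftr_coeff_def)

lemma exp_powr_term_0 [simp]: "exp_powr_term nu y 0 = 1"
  by (simp add: exp_powr_term_def)

lemma exp_powr_term_nonneg: "0 \<le> exp_powr_term nu y m"
  by (simp add: exp_powr_term_def)

lemma exp_powr_term_eq_exp:
  "0 < y \<Longrightarrow> exp_powr_term nu y m = exp (nu * real m * ln y - ln_fact m)"
  by (simp add: exp_powr_term_def power_eq_exp_ln ln_fact_def exp_diff powr_def mult_ac)

lemma exp_powr_term_sums: "exp_powr_term nu y sums exp (y powr nu)"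
proof -
  have "exp_powr_term nu y = (\<lambda>m. (y powr nu) ^ m /\<^sub>R fact m)"
    by (simp add: exp_powr_term_def fun_eq_iff divide_inverse mult.commute)
  then show ?thesis using exp_converges[of "y powr nu"] by simp
qed

lemma exp_powr_term_Suc_sums: "(\<lambda>m. exp_powr_term nu y (Suc m)) sums (exp (y powr nu) - 1)"
  using sums_Suc_iff[of "exp_powr_term nu y"] exp_powr_term_sums by simp

lemma summable_exp_powr_term_Suc: "summable (\<lambda>m. exp_powr_term nu y (Suc m))"
  using exp_powr_term_Suc_sums by (rule sums_summable)

lemma suminf_exp_powr_term_Suc: "(\<Sum>m. exp_powr_term nu y (Suc m)) = exp (y powr nu) - 1"
  using exp_powr_term_Suc_sums by (rule sums_unique[symmetric])

lemma summable_exp_powr_term: "summable (exp_powr_term nu y)"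
  using exp_powr_term_sums by (rule sums_summable)

lemma suminf_exp_powr_term: "suminf (exp_powr_term nu y) = exp (y powr nu)"
  using exp_powr_term_sums by (rule sums_unique[symmetric])

lemma ftr_term_add_diff_eq:
  "ftr_term nu (x + y) n - ftr_term nu x n
    = (\<Sum>i<n. ftr_coeff nu n * real (n choose i) * x ^ i * y ^ (n - i))"
proof -
  have "ftr_term nu (x + y) n = ftr_coeff nu n * (\<Sum>i\<le>n. real (n choose i) * x ^ i * y ^ (n - i))"
    by (simp add: ftr_term_def binomial_ring)
  also have "\<dots> = ftr_coeff nu n * (\<Sum>i<n. real (n choose i) * x ^ i * y ^ (n - i)) + ftr_term nu x n"
    by (simp add: ftr_term_def lessThan_Suc_atMost[symmetric] distrib_left)
  finally show ?thesis by (simp add: sum_distrib_left mult_ac)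
qed

context
  fixes nu :: real
  assumes nu_pos: "0 < nu" and nu_le_1: "nu \<le> 1"
begin

lemma ftr_coeff_eq_exp: "ftr_coeff nu n = exp (- (1 / nu) * ln_fact n)"
  by (simp add: ftr_coeff_def powr_def ln_fact_def)

lemma ftr_coeff_pos: "0 < ftr_coeff nu n"
  by (simp add: ftr_coeff_eq_exp)

lemma ftr_coeff_le_inverse_fact: "ftr_coeff nu n \<le> 1 / fact n"
proof -
  have "fact n powr 1 \<le> fact n powr (1 / nu)"
    using nu_pos nu_le_1 by (intro powr_mono) auto
  then show ?thesis by (simp add: ftr_coeff_def powr_minus_divide divide_simps)
qed

lemma ftr_coeff_Suc_le: "ftr_coeff nu (Suc n) \<le> ftr_coeff nu n"
  using nu_pos by (simp add: ftr_coeff_eq_exp ln_fact_Suc divide_right_mono)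

(* With C = (i + m) choose i: ftr_coeff nu (i + m) * C = (fact i * fact m) powr (- 1 / nu) * C powr (1 - 1 / nu), and C \<ge> 1. *)
lemma ftr_coeff_binomial_le:
  "ftr_coeff nu (i + m) * real ((i + m) choose i) \<le> ftr_coeff nu i * ftr_coeff nu m"
proof -
  have "1 \<le> real ((i + m) choose i)"
    by (simp add: Suc_leI)
  then have "0 \<le> ln (real ((i + m) choose i))"
    by simp
  then have "0 \<le> ln_fact (i + m) - ln_fact i - ln_fact m"
    by (simp add: binomial_eq_exp_ln_fact)
  then have "0 \<le> (1 / nu - 1) * (ln_fact (i + m) - ln_fact i - ln_fact m)"
    using nu_pos nu_le_1 by (intro mult_nonneg_nonneg) auto
  then have "- (1 / nu) * ln_fact (i + m) + (ln_fact (i + m) - ln_fact i - ln_fact m)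
      \<le> - (1 / nu) * ln_fact i + - (1 / nu) * ln_fact m"
    by (simp add: algebra_simps)
  then show ?thesis
    by (simp only: ftr_coeff_eq_exp binomial_eq_exp_ln_fact[OF le_add1] add_diff_cancel_left'
        exp_add [symmetric] exp_le_cancel_iff)
qed

lemma ftr_term_eq_exp:
  "0 < x \<Longrightarrow> ftr_term nu x n = exp (- (1 / nu) * ln_fact n + real n * ln x)"
  by (simp only: ftr_term_def ftr_coeff_eq_exp power_eq_exp_ln exp_add)

lemma ftr_term_nonneg: "0 \<le> x \<Longrightarrow> 0 \<le> ftr_term nu x n"
  by (simp add: ftr_term_def ftr_coeff_pos less_imp_le)

lemma summable_ftr_term:
  assumes "0 \<le> x"
  shows "summable (ftr_term nu x)"
proof (rule summable_comparison_test')
  show "summable (\<lambda>n. x ^ n / fact n)"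
    using summable_exp[of x] by (simp add: divide_inverse mult.commute)
  fix n
  have "ftr_term nu x n \<le> 1 / fact n * x ^ n"
    unfolding ftr_term_def using assms by (intro mult_right_mono ftr_coeff_le_inverse_fact) auto
  then show "norm (ftr_term nu x n) \<le> x ^ n / fact n"
    using ftr_term_nonneg[OF assms] by simp
qed

lemma ftr_term_Suc_suminf:
  "0 \<le> x \<Longrightarrow> (\<Sum>n. ftr_term nu x (Suc n)) = ftr nu x - 1"
  by (simp add: suminf_split_head summable_ftr_term ftr_eq_suminf)

lemma ftr_ge_1_plus: "0 \<le> x \<Longrightarrow> 1 + x \<le> ftr nu x"
  using sum_le_suminf[OF summable_ftr_term, of x "{..<2}"] ftr_term_nonneg[of x]
  by (simp add: ftr_eq_suminf ftr_term_def ftr_coeff_def numeral_2_eq_2)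

lemma ftr_ge_1: "0 \<le> x \<Longrightarrow> 1 \<le> ftr nu x"
  using ftr_ge_1_plus[of x] by simp

lemma ftr_zero [simp]: "ftr nu 0 = 1"
  unfolding ftr_def using powser_zero[of "\<lambda>j. fact j powr (- 1 / nu)"] by simp

lemma ftr_mono: "0 \<le> x \<Longrightarrow> x \<le> y \<Longrightarrow> ftr nu x \<le> ftr nu y"
  unfolding ftr_eq_suminf
  by (intro suminf_le summable_ftr_term)
     (auto simp: ftr_term_def ftr_coeff_pos less_imp_le intro!: mult_left_mono power_mono)

lemma powr_le_ftr: "0 \<le> x \<Longrightarrow> x powr nu \<le> ftr nu x"
proof -
  assume x: "0 \<le> x"
  have "x powr nu \<le> 1 + x"
  proof (cases "x \<le> 1")
    case True
    then show ?thesis using x nu_pos powr_le1[of nu x] by auto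
  next
    case False
    then show ?thesis using nu_le_1 powr_mono[of nu 1 x] by auto
  qed
  then show ?thesis using ftr_ge_1_plus[OF x] by simp
qed

lemma le_rpow_mult_ftr: "0 \<le> x \<Longrightarrow> x \<le> rpow x (1 - nu) * ftr nu x"
  using rpow_mult_powr[OF nu_pos, of x] powr_le_ftr[of x] rpow_nonneg[of x "1 - nu"]
  by (metis mult_left_mono)

lemma ftr_add_le_mult:
  assumes x: "0 \<le> x" and y: "0 \<le> y"
  shows "ftr nu (x + y) \<le> ftr nu x * ftr nu y"
proof -
  let ?C = "\<lambda>n. \<Sum>i\<le>n. ftr_term nu x i * ftr_term nu y (n - i)"
  have cauchy: "?C sums (ftr nu x * ftr nu y)"
    unfolding ftr_eq_suminf using x y
    by (intro Cauchy_product_sums) (simp_all add: ftr_term_nonneg summable_ftr_term)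
  have termwise: "ftr_term nu (x + y) n \<le> ?C n" for n
  proof -
    have "ftr_term nu (x + y) n = (\<Sum>i\<le>n. ftr_coeff nu n * real (n choose i) * (x ^ i * y ^ (n - i)))"
      by (simp add: ftr_term_def binomial_ring sum_distrib_left mult_ac)
    also have "\<dots> \<le> ?C n"
    proof (intro sum_mono)
      fix i assume "i \<in> {..n}"
      then have "ftr_coeff nu n * real (n choose i) \<le> ftr_coeff nu i * ftr_coeff nu (n - i)"
        using ftr_coeff_binomial_le[of i "n - i"] by simp
      then have "ftr_coeff nu n * real (n choose i) * (x ^ i * y ^ (n - i))
          \<le> ftr_coeff nu i * ftr_coeff nu (n - i) * (x ^ i * y ^ (n - i))"
        using x y by (intro mult_right_mono) auto
      then show "ftr_coeff nu n * real (n choose i) * (x ^ i * y ^ (n - i))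
          \<le> ftr_term nu x i * ftr_term nu y (n - i)"
        by (simp add: ftr_term_def mult_ac)
    qed
    finally show ?thesis .
  qed
  have "ftr nu (x + y) \<le> suminf ?C"
    unfolding ftr_eq_suminf using termwise cauchy x y
    by (intro suminf_le summable_ftr_term) (auto dest: sums_summable)
  with cauchy show ?thesis by (simp add: sums_iff)
qed

lemma ftr_add_diff_le_by_terms:
  assumes x: "0 \<le> x" and y: "0 \<le> y" and w': "0 \<le> w'"
    and term_le: "\<And>n i. i < n \<Longrightarrow> w * (ftr_coeff nu n * real (n choose i) * x ^ i * y ^ (n - i))
      \<le> w' * ((1 - nu) * P n i + nu * Q n i)"
    and P: "\<And>N. (\<Sum>n<N. \<Sum>i<n. P n i) \<le> B" and Q: "\<And>N. (\<Sum>n<N. \<Sum>i<n. Q n i) \<le> B"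
  shows "w * (ftr nu (x + y) - ftr nu x) \<le> w' * B"
proof -
  have s: "summable (ftr_term nu (x + y))" "summable (ftr_term nu x)"
    using x y by (auto intro: summable_ftr_term)
  have "w * (ftr nu (x + y) - ftr nu x) = (\<Sum>n. w * (ftr_term nu (x + y) n - ftr_term nu x n))"
    unfolding ftr_eq_suminf using s by (simp add: suminf_diff suminf_mult summable_diff)
  also have "\<dots> \<le> w' * B"
  proof (rule suminf_le_const)
    show "summable (\<lambda>n. w * (ftr_term nu (x + y) n - ftr_term nu x n))"
      using s by (intro summable_mult summable_diff)
    fix N
    have "(\<Sum>n<N. w * (ftr_term nu (x + y) n - ftr_term nu x n))
        = (\<Sum>n<N. \<Sum>i<n. w * (ftr_coeff nu n * real (n choose i) * x ^ i * y ^ (n - i)))"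
      by (simp add: ftr_term_add_diff_eq sum_distrib_left)
    also have "\<dots> \<le> (\<Sum>n<N. \<Sum>i<n. w' * ((1 - nu) * P n i + nu * Q n i))"
      by (intro sum_mono term_le) auto
    also have "\<dots> = w' * ((1 - nu) * (\<Sum>n<N. \<Sum>i<n. P n i) + nu * (\<Sum>n<N. \<Sum>i<n. Q n i))"
      by (simp add: sum.distrib sum_distrib_left distrib_left mult.assoc)
    also have "\<dots> \<le> w' * ((1 - nu) * B + nu * B)"
      using P Q nu_pos nu_le_1 w' by (intro mult_left_mono add_mono) auto
    finally show "(\<Sum>n<N. w * (ftr_term nu (x + y) n - ftr_term nu x n)) \<le> w' * B"
      by (simp add: algebra_simps)
  qed
  finally show ?thesis .
qed

(* In the term bounds both sides are exponentials of expressions linear in ln x, ln y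
   and ln_fact, so exp_le_convex_combination reduces each of them to a linear inequality,
   whose slack is displayed as a product of nonnegative factors. *)
lemma term_bound_small_incr:
  assumes y: "0 < y" and yx: "y \<le> x" and m: "1 \<le> m"
  shows "rpow x (1 - nu) * (ftr_coeff nu (i + m) * real ((i + m) choose i) * x ^ i * y ^ m)
    \<le> rpow y (1 - nu) * ((1 - nu) * (ftr_term nu x (i + m) * exp_powr_term nu y m)
        + nu * (ftr_term nu x i * exp_powr_term nu y m))"
proof -
  have x: "0 < x" using y yx by simp
  have L: "rpow x (1 - nu) * (ftr_coeff nu (i + m) * real ((i + m) choose i) * x ^ i * y ^ m)
     = exp ((1 - nu) * ln x + (- (1 / nu) * ln_fact (i + m) + (ln_fact (i + m) - ln_fact i - ln_fact m)
         + real i * ln x + real m * ln y))"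
    by (simp add: rpow_eq_exp_ln[OF x] ftr_coeff_eq_exp binomial_eq_exp_ln_fact power_eq_exp_ln[OF x]
        power_eq_exp_ln[OF y] exp_add exp_diff exp_minus field_simps)
  have P: "ftr_term nu x (i + m) * exp_powr_term nu y m
      = exp ((- (1 / nu) * ln_fact (i + m) + real (i + m) * ln x) + (nu * real m * ln y - ln_fact m))"
    by (simp add: ftr_term_eq_exp[OF x] exp_powr_term_eq_exp[OF y] exp_add)
  have Q: "ftr_term nu x i * exp_powr_term nu y m
      = exp ((- (1 / nu) * ln_fact i + real i * ln x) + (nu * real m * ln y - ln_fact m))"
    by (simp add: ftr_term_eq_exp[OF x] exp_powr_term_eq_exp[OF y] exp_add)
  have "(1 - nu) * ln x + (- (1 / nu) * ln_fact (i + m) + (ln_fact (i + m) - ln_fact i - ln_fact m)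
          + real i * ln x + real m * ln y)
        \<le> (1 - nu) * ln y
          + (1 - nu) * ((- (1 / nu) * ln_fact (i + m) + real (i + m) * ln x) + (nu * real m * ln y - ln_fact m))
          + nu * ((- (1 / nu) * ln_fact i + real i * ln x) + (nu * real m * ln y - ln_fact m))"
    (is "?lhs \<le> ?rhs")
  proof -
    have "?rhs - ?lhs = (1 - nu) * (real m - 1) * (ln x - ln y)"
      using nu_pos by (simp add: field_simps)
    moreover have "0 \<le> (1 - nu) * (real m - 1) * (ln x - ln y)"
      using nu_le_1 m y yx by (intro mult_nonneg_nonneg) auto
    ultimately show ?thesis by linarith
  qed
  then show ?thesis
    unfolding L P Q rpow_eq_exp_ln[OF y]
    by (rule exp_le_convex_combination[OF less_imp_le[OF nu_pos] nu_le_1])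
qed

lemma term_bound_large_incr:
  assumes x: "0 < x" and xy: "x \<le> y" and q: "0 \<le> q"
  shows "rpow x q * (ftr_coeff nu (i + m) * real ((i + m) choose i) * x ^ i * y ^ m)
    \<le> rpow y q * ((1 - nu) * (exp_powr_term nu x i * ftr_term nu y (i + m))
        + nu * (exp_powr_term nu x i * ftr_term nu y m))"
proof -
  have y: "0 < y" using x xy by simp
  have L: "rpow x q * (ftr_coeff nu (i + m) * real ((i + m) choose i) * x ^ i * y ^ m)
     = exp (q * ln x + (- (1 / nu) * ln_fact (i + m) + (ln_fact (i + m) - ln_fact i - ln_fact m)
         + real i * ln x + real m * ln y))"
    by (simp add: rpow_eq_exp_ln[OF x] ftr_coeff_eq_exp binomial_eq_exp_ln_fact power_eq_exp_ln[OF x]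
        power_eq_exp_ln[OF y] exp_add exp_diff exp_minus field_simps)
  have P: "exp_powr_term nu x i * ftr_term nu y (i + m)
      = exp ((nu * real i * ln x - ln_fact i) + (- (1 / nu) * ln_fact (i + m) + real (i + m) * ln y))"
    by (simp add: ftr_term_eq_exp[OF y] exp_powr_term_eq_exp[OF x] exp_add)
  have Q: "exp_powr_term nu x i * ftr_term nu y m
      = exp ((nu * real i * ln x - ln_fact i) + (- (1 / nu) * ln_fact m + real m * ln y))"
    by (simp add: ftr_term_eq_exp[OF y] exp_powr_term_eq_exp[OF x] exp_add)
  have "q * ln x + (- (1 / nu) * ln_fact (i + m) + (ln_fact (i + m) - ln_fact i - ln_fact m)
          + real i * ln x + real m * ln y)
        \<le> q * ln y
          + (1 - nu) * ((nu * real i * ln x - ln_fact i) + (- (1 / nu) * ln_fact (i + m) + real (i + m) * ln y))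
          + nu * ((nu * real i * ln x - ln_fact i) + (- (1 / nu) * ln_fact m + real m * ln y))"
    (is "?lhs \<le> ?rhs")
  proof -
    have "?rhs - ?lhs = (q + (1 - nu) * real i) * (ln y - ln x)"
      using nu_pos by (simp add: field_simps)
    moreover have "0 \<le> (q + (1 - nu) * real i) * (ln y - ln x)"
      using nu_le_1 q x xy by (intro mult_nonneg_nonneg) auto
    ultimately show ?thesis by linarith
  qed
  then show ?thesis
    unfolding L P Q rpow_eq_exp_ln[OF y]
    by (rule exp_le_convex_combination[OF less_imp_le[OF nu_pos] nu_le_1])
qed

lemma term_bound_mult:
  assumes x: "0 < x" and y: "0 < y"
  shows "rpow x (1 - nu) * (ftr_coeff nu (i + Suc j) * real ((i + Suc j) choose i) * x ^ i * y ^ Suc j)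
    \<le> rpow y (1 - nu) * ((1 - nu) * (ftr_term nu x (Suc i) * ftr_term nu y j)
        + nu * (ftr_term nu x i * ftr_term nu y (Suc j)))"
proof -
  have L: "rpow x (1 - nu) * (ftr_coeff nu (i + Suc j) * real ((i + Suc j) choose i) * x ^ i * y ^ Suc j)
     = exp ((1 - nu) * ln x + (- (1 / nu) * ln_fact (i + Suc j)
         + (ln_fact (i + Suc j) - ln_fact i - ln_fact (Suc j)) + real i * ln x + real (Suc j) * ln y))"
    by (simp only: rpow_eq_exp_ln[OF x] ftr_coeff_eq_exp binomial_eq_exp_ln_fact[OF le_add1]
        power_eq_exp_ln[OF x] power_eq_exp_ln[OF y] exp_add exp_diff add_diff_cancel_left')
  have P: "ftr_term nu x (Suc i) * ftr_term nu y j
      = exp ((- (1 / nu) * ln_fact (Suc i) + real (Suc i) * ln x) + (- (1 / nu) * ln_fact j + real j * ln y))"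
    by (simp only: ftr_term_eq_exp[OF x] ftr_term_eq_exp[OF y] exp_add)
  have Q: "ftr_term nu x i * ftr_term nu y (Suc j)
      = exp ((- (1 / nu) * ln_fact i + real i * ln x) + (- (1 / nu) * ln_fact (Suc j) + real (Suc j) * ln y))"
    by (simp only: ftr_term_eq_exp[OF x] ftr_term_eq_exp[OF y] exp_add)
  have "(1 - nu) * ln x + (- (1 / nu) * ln_fact (i + Suc j)
          + (ln_fact (i + Suc j) - ln_fact i - ln_fact (Suc j)) + real i * ln x + real (Suc j) * ln y)
        \<le> (1 - nu) * ln y
          + (1 - nu) * ((- (1 / nu) * ln_fact (Suc i) + real (Suc i) * ln x) + (- (1 / nu) * ln_fact j + real j * ln y))
          + nu * ((- (1 / nu) * ln_fact i + real i * ln x) + (- (1 / nu) * ln_fact (Suc j) + real (Suc j) * ln y))"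
    (is "?lhs \<le> ?rhs")
  proof -
    have "?rhs - ?lhs = (1 / nu - 1) * ((ln_fact (i + Suc j) - ln_fact i - ln_fact (Suc j))
        - ln (real (Suc i)) + ln (real (Suc j)))"
      using nu_pos unfolding ln_fact_Suc by (simp add: field_simps)
    moreover have "0 \<le> (1 / nu - 1) * ((ln_fact (i + Suc j) - ln_fact i - ln_fact (Suc j))
        - ln (real (Suc i)) + ln (real (Suc j)))"
      using nu_pos nu_le_1 ln_Suc_le_ln_binomial[of i j] by (intro mult_nonneg_nonneg) auto
    ultimately show ?thesis by linarith
  qed
  then show ?thesis
    unfolding L P Q rpow_eq_exp_ln[OF y]
    by (rule exp_le_convex_combination[OF less_imp_le[OF nu_pos] nu_le_1])
qed

lemma term_bound_diff:
  assumes y: "0 < y" and x: "0 \<le> x" and xy: "x \<le> y"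
  shows "rpow y (1 - nu) * (ftr_coeff nu (Suc j) * (y ^ Suc j - x ^ Suc j))
    \<le> (y - x) * ((1 - nu) * ftr_term nu y (Suc j) + nu * ftr_term nu y j)"
proof -
  have L: "rpow y (1 - nu) * (ftr_coeff nu (Suc j) * (real (Suc j) * y ^ j))
     = exp ((1 - nu) * ln y + (- (1 / nu) * ln_fact (Suc j) + ln (real (Suc j)) + real j * ln y))"
    unfolding exp_add by (simp add: rpow_eq_exp_ln[OF y] ftr_coeff_eq_exp power_eq_exp_ln[OF y] mult_ac
        del: of_nat_Suc)
  have "(1 - nu) * ln y + (- (1 / nu) * ln_fact (Suc j) + ln (real (Suc j)) + real j * ln y)
     \<le> 0 + (1 - nu) * (- (1 / nu) * ln_fact (Suc j) + real (Suc j) * ln y)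
        + nu * (- (1 / nu) * ln_fact j + real j * ln y)"
    using nu_pos unfolding ln_fact_Suc by (simp add: field_simps)
  then have term_le: "rpow y (1 - nu) * (ftr_coeff nu (Suc j) * (real (Suc j) * y ^ j))
      \<le> exp 0 * ((1 - nu) * ftr_term nu y (Suc j) + nu * ftr_term nu y j)"
    unfolding L ftr_term_eq_exp[OF y]
    by (rule exp_le_convex_combination[OF less_imp_le[OF nu_pos] nu_le_1])
  have "rpow y (1 - nu) * (ftr_coeff nu (Suc j) * (y ^ Suc j - x ^ Suc j))
      \<le> rpow y (1 - nu) * (ftr_coeff nu (Suc j) * ((y - x) * (real (Suc j) * y ^ j)))"
    using power_Suc_diff_le[OF x xy] by (intro mult_left_mono rpow_nonneg) (auto simp: ftr_coeff_pos less_imp_le)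
  also have "\<dots> = (y - x) * (rpow y (1 - nu) * (ftr_coeff nu (Suc j) * (real (Suc j) * y ^ j)))"
    by (simp add: mult_ac)
  also have "\<dots> \<le> (y - x) * ((1 - nu) * ftr_term nu y (Suc j) + nu * ftr_term nu y j)"
    using term_le xy by (intro mult_left_mono) auto
  finally show ?thesis .
qed

lemma ftr_add_diff_le_small_incr:
  assumes y: "0 \<le> y" and yx: "y \<le> x"
  shows "rpow x (1 - nu) * (ftr nu (x + y) - ftr nu x)
    \<le> rpow y (1 - nu) * (ftr nu x * (exp (y powr nu) - 1))"
proof (cases "y = 0")
  case True
  then show ?thesis using nu_pos by simp
next
  case False
  with y yx have y: "0 < y" and x: "0 \<le> x" by auto
  show ?thesis
  proof (rule ftr_add_diff_le_by_terms[where P = "\<lambda>n i. ftr_term nu x n * exp_powr_term nu y (n - i)"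
        and Q = "\<lambda>n i. ftr_term nu x i * exp_powr_term nu y (n - i)"])
    fix n i :: nat
    assume "i < n"
    then show "rpow x (1 - nu) * (ftr_coeff nu n * real (n choose i) * x ^ i * y ^ (n - i))
        \<le> rpow y (1 - nu) * ((1 - nu) * (ftr_term nu x n * exp_powr_term nu y (n - i))
          + nu * (ftr_term nu x i * exp_powr_term nu y (n - i)))"
      using term_bound_small_incr[OF y yx, of "n - i" i] by simp
  next
    fix N
    have "(\<Sum>n<N. \<Sum>i<n. ftr_term nu x n * exp_powr_term nu y (n - i))
        \<le> suminf (ftr_term nu x) * (\<Sum>m. exp_powr_term nu y (Suc m))"
      by (rule triangle_sum_le_suminf_mult[where f = "\<lambda>n i. n" and g = "\<lambda>n i. n - Suc i"])
         (use x in \<open>auto simp: ftr_term_nonneg exp_powr_term_nonneg summable_ftr_term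
            summable_exp_powr_term_Suc inj_on_def Suc_diff_Suc\<close>)
    then show "(\<Sum>n<N. \<Sum>i<n. ftr_term nu x n * exp_powr_term nu y (n - i))
        \<le> ftr nu x * (exp (y powr nu) - 1)"
      by (simp add: ftr_eq_suminf suminf_exp_powr_term_Suc)
    have "(\<Sum>n<N. \<Sum>i<n. ftr_term nu x i * exp_powr_term nu y (n - i))
        \<le> suminf (ftr_term nu x) * (\<Sum>m. exp_powr_term nu y (Suc m))"
      by (rule triangle_sum_le_suminf_mult[where f = "\<lambda>n i. i" and g = "\<lambda>n i. n - Suc i"])
         (use x in \<open>auto simp: ftr_term_nonneg exp_powr_term_nonneg summable_ftr_term
            summable_exp_powr_term_Suc inj_on_def Suc_diff_Suc\<close>)
    then show "(\<Sum>n<N. \<Sum>i<n. ftr_term nu x i * exp_powr_term nu y (n - i))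
        \<le> ftr nu x * (exp (y powr nu) - 1)"
      by (simp add: ftr_eq_suminf suminf_exp_powr_term_Suc)
  qed (use x y in \<open>auto intro: rpow_nonneg\<close>)
qed

lemma ftr_add_diff_le_large_incr:
  assumes x: "0 \<le> x" and xy: "x \<le> y" and q: "0 \<le> q"
  shows "rpow x q * (ftr nu (x + y) - ftr nu x) \<le> rpow y q * ((ftr nu y - 1) * exp (x powr nu))"
proof (cases "x = 0")
  case True
  have "rpow 0 q * (ftr nu y - 1) \<le> rpow y q * (ftr nu y - 1)"
    using ftr_ge_1[of y] xy True q by (intro mult_right_mono rpow_mono) auto
  then show ?thesis using True nu_pos by simp
next
  case False
  with x xy have x: "0 < x" and y: "0 \<le> y" by auto
  show ?thesis
  proof (rule ftr_add_diff_le_by_terms[where P = "\<lambda>n i. exp_powr_term nu x i * ftr_term nu y n"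
        and Q = "\<lambda>n i. exp_powr_term nu x i * ftr_term nu y (n - i)"])
    fix n i :: nat
    assume "i < n"
    then show "rpow x q * (ftr_coeff nu n * real (n choose i) * x ^ i * y ^ (n - i))
        \<le> rpow y q * ((1 - nu) * (exp_powr_term nu x i * ftr_term nu y n)
          + nu * (exp_powr_term nu x i * ftr_term nu y (n - i)))"
      using term_bound_large_incr[OF x xy q, of i "n - i"] by simp
  next
    fix N
    have "(\<Sum>n<N. \<Sum>i<n. exp_powr_term nu x i * ftr_term nu y n)
        \<le> suminf (exp_powr_term nu x) * (\<Sum>m. ftr_term nu y (Suc m))"
      by (rule triangle_sum_le_suminf_mult[where f = "\<lambda>n i. i" and g = "\<lambda>n i. n - 1"])
         (use y in \<open>auto simp: ftr_term_nonneg exp_powr_term_nonneg summable_ftr_term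
            summable_Suc_iff summable_exp_powr_term inj_on_def\<close>)
    then show "(\<Sum>n<N. \<Sum>i<n. exp_powr_term nu x i * ftr_term nu y n)
        \<le> (ftr nu y - 1) * exp (x powr nu)"
      using y by (simp add: ftr_term_Suc_suminf suminf_exp_powr_term mult.commute)
    have "(\<Sum>n<N. \<Sum>i<n. exp_powr_term nu x i * ftr_term nu y (n - i))
        \<le> suminf (exp_powr_term nu x) * (\<Sum>m. ftr_term nu y (Suc m))"
      by (rule triangle_sum_le_suminf_mult[where f = "\<lambda>n i. i" and g = "\<lambda>n i. n - Suc i"])
         (use y in \<open>auto simp: ftr_term_nonneg exp_powr_term_nonneg summable_ftr_term
            summable_Suc_iff summable_exp_powr_term inj_on_def Suc_diff_Suc\<close>)
    then show "(\<Sum>n<N. \<Sum>i<n. exp_powr_term nu x i * ftr_term nu y (n - i))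
        \<le> (ftr nu y - 1) * exp (x powr nu)"
      using y by (simp add: ftr_term_Suc_suminf suminf_exp_powr_term mult.commute)
  qed (use x y in \<open>auto intro: rpow_nonneg\<close>)
qed

lemma ftr_add_diff_le_mult:
  assumes x: "0 \<le> x" and y: "0 \<le> y"
  shows "rpow x (1 - nu) * (ftr nu (x + y) - ftr nu x) \<le> rpow y (1 - nu) * (ftr nu x * ftr nu y)"
proof (cases "x = 0 \<or> y = 0")
  case True
  then show ?thesis
  proof
    assume "x = 0"
    have "rpow 0 (1 - nu) * (ftr nu y - 1) \<le> rpow y (1 - nu) * ftr nu y"
      using ftr_ge_1[OF y] y nu_le_1 by (intro mult_mono rpow_mono rpow_nonneg) auto
    then show ?thesis using \<open>x = 0\<close> by simp
  next
    assume "y = 0"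
    then show ?thesis using ftr_ge_1[OF x] by (simp add: rpow_nonneg)
  qed
next
  case False
  with x y have x': "0 < x" and y': "0 < y" by auto
  show ?thesis
  proof (rule ftr_add_diff_le_by_terms[where P = "\<lambda>n i. ftr_term nu x (Suc i) * ftr_term nu y (n - Suc i)"
        and Q = "\<lambda>n i. ftr_term nu x i * ftr_term nu y (n - i)"])
    fix n i :: nat
    assume "i < n"
    then have "i + Suc (n - Suc i) = n" "Suc (n - Suc i) = n - i" by auto
    then show "rpow x (1 - nu) * (ftr_coeff nu n * real (n choose i) * x ^ i * y ^ (n - i))
        \<le> rpow y (1 - nu) * ((1 - nu) * (ftr_term nu x (Suc i) * ftr_term nu y (n - Suc i))
          + nu * (ftr_term nu x i * ftr_term nu y (n - i)))"
      using term_bound_mult[OF x' y', of i "n - Suc i"] by simp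
  next
    fix N
    show "(\<Sum>n<N. \<Sum>i<n. ftr_term nu x (Suc i) * ftr_term nu y (n - Suc i)) \<le> ftr nu x * ftr nu y"
      unfolding ftr_eq_suminf
      by (rule triangle_sum_le_suminf_mult[where f = "\<lambda>n i. Suc i" and g = "\<lambda>n i. n - Suc i"])
         (use x y in \<open>auto simp: ftr_term_nonneg summable_ftr_term inj_on_def\<close>)
    show "(\<Sum>n<N. \<Sum>i<n. ftr_term nu x i * ftr_term nu y (n - i)) \<le> ftr nu x * ftr nu y"
      unfolding ftr_eq_suminf
      by (rule triangle_sum_le_suminf_mult[where f = "\<lambda>n i. i" and g = "\<lambda>n i. n - i"])
         (use x y in \<open>auto simp: ftr_term_nonneg summable_ftr_term inj_on_def\<close>)
  qed (use x y in \<open>auto intro: rpow_nonneg\<close>)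
qed

lemma ftr_diff_le_dist_mult:
  assumes x: "0 \<le> x" and xy: "x \<le> y"
  shows "rpow y (1 - nu) * (ftr nu y - ftr nu x) \<le> (y - x) * ftr nu y"
proof (cases "y = 0")
  case True
  then show ?thesis using x xy by simp
next
  case False
  with x xy have y: "0 < y" and y': "0 \<le> y" by auto
  have s: "summable (ftr_term nu y)" "summable (ftr_term nu x)"
    using x y' by (auto intro: summable_ftr_term)
  define d where "d n = rpow y (1 - nu) * (ftr_term nu y n - ftr_term nu x n)" for n
  have d_nonneg: "0 \<le> d n" for n
    unfolding d_def ftr_term_def using x xy
    by (intro mult_nonneg_nonneg rpow_nonneg)
       (auto simp: ftr_coeff_pos less_imp_le power_mono intro!: mult_left_mono)
  have "rpow y (1 - nu) * (ftr nu y - ftr nu x) = suminf d"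
    unfolding ftr_eq_suminf d_def using s by (simp add: suminf_diff suminf_mult summable_diff)
  also have "\<dots> \<le> (y - x) * ftr nu y"
  proof (rule suminf_le_const)
    show "summable d" unfolding d_def using s by (intro summable_mult summable_diff)
    fix N
    have "sum d {..<N} \<le> sum d {..<Suc N}" using d_nonneg by simp
    also have "\<dots> = d 0 + (\<Sum>j<N. d (Suc j))"
      by (rule sum.lessThan_Suc_shift)
    also have "\<dots> = (\<Sum>j<N. d (Suc j))"
      by (simp add: d_def)
    also have "\<dots> \<le> (\<Sum>j<N. (y - x) * ((1 - nu) * ftr_term nu y (Suc j) + nu * ftr_term nu y j))"
      using term_bound_diff[OF y x xy] by (intro sum_mono) (simp add: d_def ftr_term_def right_diff_distrib)
    also have "\<dots> = (y - x) * ((1 - nu) * (\<Sum>j<N. ftr_term nu y (Suc j)) + nu * (\<Sum>j<N. ftr_term nu y j))"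
      by (simp add: sum_distrib_left sum.distrib distrib_left mult.assoc)
    also have "\<dots> \<le> (y - x) * ((1 - nu) * ftr nu y + nu * ftr nu y)"
    proof -
      have "(\<Sum>j<N. ftr_term nu y (Suc j)) \<le> ftr nu y - 1"
        using y' s(1) by (simp add: sum_le_suminf summable_Suc_iff ftr_term_nonneg flip: ftr_term_Suc_suminf)
      moreover have "(\<Sum>j<N. ftr_term nu y j) \<le> ftr nu y"
        unfolding ftr_eq_suminf using y' s(1) by (simp add: sum_le_suminf ftr_term_nonneg)
      ultimately show ?thesis
        using nu_pos nu_le_1 xy by (intro mult_left_mono add_mono) auto
    qed
    finally show "sum d {..<N} \<le> (y - x) * ftr nu y" by (simp add: algebra_simps)
  qed
  finally show ?thesis .
qed

lemma ftr_add_le_mult_exp: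
  assumes y: "0 \<le> y" and yx: "y \<le> x"
  shows "ftr nu (x + y) \<le> ftr nu x * exp (y powr nu)"
proof (cases "y = 0")
  case True
  then show ?thesis using nu_pos by simp
next
  case False
  with y yx have x: "0 < x" by simp
  have "rpow x (1 - nu) * (ftr nu (x + y) - ftr nu x)
      \<le> rpow y (1 - nu) * (ftr nu x * (exp (y powr nu) - 1))"
    by (rule ftr_add_diff_le_small_incr[OF y yx])
  also have "\<dots> \<le> rpow x (1 - nu) * (ftr nu x * (exp (y powr nu) - 1))"
    using ftr_ge_1[of x] x y yx nu_le_1 by (intro mult_right_mono rpow_mono mult_nonneg_nonneg) auto
  finally have "ftr nu (x + y) - ftr nu x \<le> ftr nu x * (exp (y powr nu) - 1)"
    using rpow_pos[OF x] by simp
  then show ?thesis by (simp add: algebra_simps)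
qed

lemma ftr_minus_1_le_mult:
  assumes b: "0 \<le> b"
  shows "ftr nu b - 1 \<le> (exp (b powr nu) - 1) * ftr nu b"
proof -
  have s: "summable (ftr_term nu b)" by (rule summable_ftr_term[OF b])
  have "ftr nu b - 1 = (\<Sum>n. ftr_term nu b (Suc n))"
    using ftr_term_Suc_suminf[OF b] by simp
  also have "\<dots> \<le> (\<Sum>n. b * ftr_term nu b n)"
  proof (rule suminf_le)
    fix n
    have "ftr_coeff nu (Suc n) * b ^ Suc n \<le> ftr_coeff nu n * b ^ Suc n"
      using b by (intro mult_right_mono ftr_coeff_Suc_le) auto
    then show "ftr_term nu b (Suc n) \<le> b * ftr_term nu b n" by (simp add: ftr_term_def mult_ac)
  qed (use s in \<open>auto simp: summable_Suc_iff intro: summable_mult\<close>)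
  also have "\<dots> = b * ftr nu b" using s by (simp add: suminf_mult ftr_eq_suminf)
  finally have by_b: "ftr nu b - 1 \<le> b * ftr nu b" .
  have "min b 1 \<le> b powr nu"
  proof (cases "b \<le> 1")
    case True
    have "b powr 1 \<le> b powr nu" using True b nu_le_1 by (intro powr_mono') auto
    then show ?thesis using True b by (cases "b = 0") auto
  next
    case False
    then show ?thesis using nu_pos ge_one_powr_ge_zero[of b nu] by simp
  qed
  have "ftr nu b - 1 \<le> min b 1 * ftr nu b"
    using by_b ftr_ge_1[OF b] by (cases "b \<le> 1") (auto simp: min_def)
  also have "\<dots> \<le> b powr nu * ftr nu b"
    using \<open>min b 1 \<le> b powr nu\<close> ftr_ge_1[OF b] by (intro mult_right_mono) auto
  also have "\<dots> \<le> (exp (b powr nu) - 1) * ftr nu b"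
  proof (rule mult_right_mono)
    show "b powr nu \<le> exp (b powr nu) - 1"
      using exp_ge_add_one_self[of "b powr nu"] by linarith
  qed (use ftr_ge_1[OF b] in simp)
  finally show ?thesis .
qed

section \<open>Truncated radial profiles\<close>

lemma ftr_max_mono: "0 \<le> a \<Longrightarrow> a \<le> b \<Longrightarrow> ftr nu (max a th) \<le> ftr nu (max b th)"
  by (intro ftr_mono) auto

lemma ftr_le_ftr_max: "0 \<le> a \<Longrightarrow> ftr nu a \<le> ftr nu (max a th)"
  by (intro ftr_mono) auto

lemma ftr_max_ge_1: "0 \<le> th \<Longrightarrow> 1 \<le> ftr nu (max a th)"
  by (intro ftr_ge_1) auto

lemma ftr_max_diff_le_add_diff:
  assumes a: "0 \<le> a" and ab: "a \<le> b" and bac: "b \<le> a + c"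
  shows "ftr nu (max b th) - ftr nu (max a th) \<le> ftr nu (a + c) - ftr nu a"
proof (cases "b \<le> th")
  case True
  then show ?thesis using a ab bac ftr_mono[of a "a + c"] by simp
next
  case False
  then show ?thesis using a ab bac ftr_mono[of b "a + c"] ftr_le_ftr_max[of a th] by simp
qed

lemma ftr_max_abs_diff_le_add_diff:
  assumes b: "0 \<le> b" and ba: "b \<le> a" and abc: "a \<le> b + c"
  shows "\<bar>ftr nu (max a th) - ftr nu (max b th)\<bar> * rpow b (1 - nu)
    \<le> rpow b (1 - nu) * (ftr nu (b + c) - ftr nu b)"
  using ftr_max_diff_le_add_diff[OF b ba abc, of th] ftr_max_mono[OF b ba, of th]
  by (simp add: mult.commute mult_left_mono rpow_nonneg)

lemma ftr_max_submult:
  assumes a: "0 \<le> a" and b: "0 \<le> b" and c: "0 \<le> c" and th: "0 \<le> th" and abc: "a \<le> b + c"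
  shows "ftr nu (max a th) \<le> ftr nu (max c th) * ftr nu (max b th)"
proof -
  have "ftr nu (max a th) \<le> ftr nu (max c th + max b th)"
    using a b c th abc by (intro ftr_mono) auto
  also have "\<dots> \<le> ftr nu (max c th) * ftr nu (max b th)"
    using c th by (intro ftr_add_le_mult) auto
  finally show ?thesis .
qed

lemma ftr_max_le_mult_exp:
  assumes a: "0 \<le> a" and b: "0 \<le> b" and c: "0 \<le> c" and th: "0 \<le> th" and abc: "a \<le> b + c"
    and "min a b \<le> c"
  shows "ftr nu (max a th) \<le> ftr nu (max c th) * exp (b powr nu)"
proof -
  have c_le: "ftr nu (max c th) \<le> ftr nu (max c th) * exp (b powr nu)"
    using ftr_max_ge_1[OF th, of c] by simp
  consider "a \<le> c" | "a \<le> th" | "b \<le> c" "th < a"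
    using \<open>min a b \<le> c\<close> by linarith
  then show ?thesis
  proof cases
    case 1
    then show ?thesis using ftr_max_mono[OF a, of c th] c_le by linarith
  next
    case 2
    then have "ftr nu (max a th) \<le> ftr nu (max c th)"
      using th by (intro ftr_mono) auto
    then show ?thesis using c_le by linarith
  next
    case 3
    then have "ftr nu (max a th) \<le> ftr nu (max c th + b)"
      using abc a by (intro ftr_mono) auto
    also have "\<dots> \<le> ftr nu (max c th) * exp (b powr nu)"
      using b 3 by (intro ftr_add_le_mult_exp) auto
    finally show ?thesis .
  qed
qed

lemma ftr_max_diff_le_dist:
  assumes a: "0 \<le> a" and th: "0 \<le> th" and ab: "a \<le> b" and bac: "b \<le> a + c"
  shows "(ftr nu (max b th) - ftr nu (max a th)) * rpow b (1 - nu) \<le> c * ftr nu (max b th)"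
proof -
  have "(ftr nu (max b th) - ftr nu (max a th)) * rpow b (1 - nu)
      \<le> rpow (max b th) (1 - nu) * (ftr nu (max b th) - ftr nu (max a th))"
    using ftr_max_mono[OF a ab, of th] a ab nu_le_1
    by (subst mult.commute) (intro mult_right_mono rpow_mono, auto)
  also have "\<dots> \<le> (max b th - max a th) * ftr nu (max b th)"
    using a ab by (intro ftr_diff_le_dist_mult) auto
  also have "\<dots> \<le> c * ftr nu (max b th)"
    using ab bac ftr_max_ge_1[OF th, of b] by (intro mult_right_mono) auto
  finally show ?thesis .
qed

lemma ftr_max_diff_le_mult:
  assumes a: "0 \<le> a" and b: "0 \<le> b" and c: "0 \<le> c" and th: "0 \<le> th"
    and abc: "a \<le> b + c" and bac: "b \<le> a + c"
  shows "\<bar>ftr nu (max a th) - ftr nu (max b th)\<bar> * rpow b (1 - nu)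
     \<le> rpow c (1 - nu) * ftr nu (max c th) * ftr nu (max b th)"
proof (cases "b \<le> a")
  case True
  have "\<bar>ftr nu (max a th) - ftr nu (max b th)\<bar> * rpow b (1 - nu)
      \<le> rpow b (1 - nu) * (ftr nu (b + c) - ftr nu b)"
    by (rule ftr_max_abs_diff_le_add_diff[OF b True abc])
  also have "\<dots> \<le> rpow c (1 - nu) * (ftr nu b * ftr nu c)"
    by (rule ftr_add_diff_le_mult[OF b c])
  also have "\<dots> \<le> rpow c (1 - nu) * (ftr nu (max b th) * ftr nu (max c th))"
    using ftr_ge_1[OF b] ftr_ge_1[OF c] ftr_le_ftr_max[OF b, of th] ftr_le_ftr_max[OF c, of th]
    by (intro mult_left_mono mult_mono rpow_nonneg) auto
  finally show ?thesis by (simp add: mult_ac)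
next
  case False
  then have ab: "a \<le> b" by simp
  have "\<bar>ftr nu (max a th) - ftr nu (max b th)\<bar> * rpow b (1 - nu)
      = (ftr nu (max b th) - ftr nu (max a th)) * rpow b (1 - nu)"
    using ftr_max_mono[OF a ab, of th] by simp
  also have "\<dots> \<le> c * ftr nu (max b th)"
    by (rule ftr_max_diff_le_dist[OF a th ab bac])
  also have "\<dots> \<le> rpow c (1 - nu) * ftr nu (max c th) * ftr nu (max b th)"
    using le_rpow_mult_ftr[OF c] ftr_le_ftr_max[OF c, of th] ftr_max_ge_1[OF th, of b]
      rpow_nonneg[of c "1 - nu"]
    by (intro mult_right_mono) (auto intro: order_trans mult_left_mono)
  finally show ?thesis .
qed

lemma ftr_max_diff_le_exp_of_le:
  assumes a: "0 \<le> a" and c: "0 \<le> c" and th: "0 \<le> th" and ab: "a \<le> b" and bac: "b \<le> a + c"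
  shows "(ftr nu (max b th) - ftr nu (max a th)) * rpow b (1 - nu)
     \<le> rpow c (1 - nu) * (exp (c powr nu) - 1) * ftr nu (max b th)"
proof -
  have b: "0 \<le> b" using a ab by simp
  consider "b \<le> th" | "th < b" "b \<le> c" | "c < b"
    by linarith
  then show ?thesis
  proof cases
    case 1
    then show ?thesis
      using ab ftr_max_ge_1[OF th, of b] by (simp add: mult_nonneg_nonneg rpow_nonneg)
  next
    case 2
    have "ftr nu (max b th) - ftr nu (max a th) \<le> ftr nu b - 1"
      using 2 ftr_max_ge_1[OF th, of a] by simp
    also have "\<dots> \<le> (exp (b powr nu) - 1) * ftr nu b"
      by (rule ftr_minus_1_le_mult[OF b])
    also have "\<dots> \<le> (exp (c powr nu) - 1) * ftr nu b"
      using 2 b nu_pos ftr_ge_1[OF b] by (intro mult_right_mono) (auto simp: powr_mono2)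
    finally have "rpow b (1 - nu) * (ftr nu (max b th) - ftr nu (max a th))
        \<le> rpow c (1 - nu) * ((exp (c powr nu) - 1) * ftr nu b)"
      using 2 b nu_le_1 ftr_max_mono[OF a ab, of th]
      by (intro mult_mono rpow_mono rpow_nonneg) auto
    then show ?thesis
      using 2 by (simp add: mult_ac)
  next
    case 3
    have "(ftr nu (max b th) - ftr nu (max a th)) * rpow b (1 - nu) \<le> c * ftr nu (max b th)"
      by (rule ftr_max_diff_le_dist[OF a th ab bac])
    also have "\<dots> \<le> rpow c (1 - nu) * (exp (c powr nu) - 1) * ftr nu (max b th)"
      using le_rpow_mult_exp_powr_minus_1[OF nu_pos c] ftr_max_ge_1[OF th, of b]
      by (intro mult_right_mono) auto
    finally show ?thesis .
  qed
qed

lemma ftr_max_diff_le_exp: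
  assumes a: "0 \<le> a" and b: "0 \<le> b" and c: "0 \<le> c" and th: "0 \<le> th"
    and abc: "a \<le> b + c" and bac: "b \<le> a + c" and "min a c \<le> b"
  shows "\<bar>ftr nu (max a th) - ftr nu (max b th)\<bar> * rpow b (1 - nu)
     \<le> rpow c (1 - nu) * (exp (c powr nu) - 1) * ftr nu (max b th)"
proof -
  consider "a = b" | "b < a" "c \<le> b" | "a < b"
    using \<open>min a c \<le> b\<close> by linarith
  then show ?thesis
  proof cases
    case 1
    then show ?thesis
      using ftr_max_ge_1[OF th, of b] by (simp add: mult_nonneg_nonneg rpow_nonneg)
  next
    case 2
    have "\<bar>ftr nu (max a th) - ftr nu (max b th)\<bar> * rpow b (1 - nu)
        \<le> rpow b (1 - nu) * (ftr nu (b + c) - ftr nu b)"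
      using 2 by (intro ftr_max_abs_diff_le_add_diff[OF b _ abc]) auto
    also have "\<dots> \<le> rpow c (1 - nu) * (ftr nu b * (exp (c powr nu) - 1))"
      using 2 by (intro ftr_add_diff_le_small_incr[OF c]) auto
    also have "\<dots> \<le> rpow c (1 - nu) * (ftr nu (max b th) * (exp (c powr nu) - 1))"
      using ftr_le_ftr_max[OF b, of th] by (intro mult_left_mono mult_right_mono rpow_nonneg) auto
    finally show ?thesis by (simp add: mult_ac)
  next
    case 3
    then show ?thesis
      using ftr_max_diff_le_exp_of_le[OF a c th _ bac] ftr_max_mono[OF a, of b th] by simp
  qed
qed

lemma ftr_max_diff_le_ftr_exp_middle:
  assumes a: "0 \<le> a" and ac: "a \<le> c" and cb: "c \<le> b" and bac: "b \<le> a + c"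
  shows "\<bar>ftr nu (max a th) - ftr nu (max b th)\<bar> * rpow b (1 - nu)
     \<le> 2 powr (1 - nu) * rpow c (1 - nu) * (ftr nu (max c th) - 1) * exp (b powr nu)"
proof -
  have c: "0 \<le> c" and b: "0 \<le> b" using a ac cb by auto
  have "rpow b (1 - nu) \<le> rpow (2 * c) (1 - nu)"
    using b bac ac nu_le_1 by (intro rpow_mono) auto
  also have "\<dots> = 2 powr (1 - nu) * rpow c (1 - nu)"
    using c by (simp add: rpow_def powr_mult)
  finally have rpow_b: "rpow b (1 - nu) \<le> 2 powr (1 - nu) * rpow c (1 - nu)" .
  have "ftr nu (max b th) - ftr nu (max a th) \<le> ftr nu (a + c) - ftr nu a"
    using a ac cb bac by (intro ftr_max_diff_le_add_diff) auto
  also have "\<dots> \<le> (ftr nu c - 1) * exp (a powr nu)"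
    using ftr_add_diff_le_large_incr[OF a ac, of 0] by (simp add: rpow_def)
  also have "\<dots> \<le> (ftr nu (max c th) - 1) * exp (b powr nu)"
    using a ac cb nu_pos ftr_le_ftr_max[OF c, of th] ftr_ge_1[OF c]
    by (intro mult_mono) (auto simp: powr_mono2)
  finally have "(ftr nu (max b th) - ftr nu (max a th)) * rpow b (1 - nu)
      \<le> ((ftr nu (max c th) - 1) * exp (b powr nu)) * (2 powr (1 - nu) * rpow c (1 - nu))"
    using rpow_b ftr_max_mono[OF a, of b th] ftr_ge_1[OF c] ftr_le_ftr_max[OF c, of th] ac cb
    by (intro mult_mono rpow_nonneg mult_nonneg_nonneg) auto
  then show ?thesis
    using ac cb ftr_max_mono[OF a, of b th] by (simp add: mult_ac)
qed

lemma ftr_max_diff_le_ftr_exp_outer: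
  assumes a: "0 \<le> a" and b: "0 \<le> b" and c: "0 \<le> c" and th: "0 \<le> th"
    and abc: "a \<le> b + c" and "min a b \<le> c" and "\<not> (a \<le> c \<and> c \<le> b)"
  shows "\<bar>ftr nu (max a th) - ftr nu (max b th)\<bar> * rpow b (1 - nu)
     \<le> rpow c (1 - nu) * (ftr nu (max c th) - 1) * exp (b powr nu)"
proof -
  have ftr_c: "ftr nu c \<le> ftr nu (max c th)"
    by (rule ftr_le_ftr_max[OF c])
  have bc: "b \<le> c"
    using assms(6,7) by (auto simp: min_def split: if_splits)
  consider "b \<le> a" | "a \<le> b" "b \<le> th" | "a < b" "th < b"
    by linarith
  then show ?thesis
  proof cases
    case 1
    have "\<bar>ftr nu (max a th) - ftr nu (max b th)\<bar> * rpow b (1 - nu)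
        \<le> rpow b (1 - nu) * (ftr nu (b + c) - ftr nu b)"
      using 1 by (intro ftr_max_abs_diff_le_add_diff[OF b _ abc])
    also have "\<dots> \<le> rpow c (1 - nu) * ((ftr nu c - 1) * exp (b powr nu))"
      using nu_le_1 by (intro ftr_add_diff_le_large_incr[OF b bc]) auto
    also have "\<dots> \<le> rpow c (1 - nu) * ((ftr nu (max c th) - 1) * exp (b powr nu))"
      using ftr_c by (simp add: mult_left_mono rpow_nonneg)
    finally show ?thesis by (simp add: mult_ac)
  next
    case 2
    then show ?thesis
      using ftr_max_ge_1[OF th, of c] by (simp add: max_def mult_nonneg_nonneg rpow_nonneg)
  next
    case 3
    have "ftr nu (max b th) - ftr nu (max a th) \<le> ftr nu b - 1"
      using 3 ftr_max_ge_1[OF th, of a] by simp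
    also have "\<dots> \<le> ftr nu (max c th) - 1"
      using b bc ftr_mono[of b c] ftr_c by simp
    also have "\<dots> \<le> (ftr nu (max c th) - 1) * exp (b powr nu)"
      using ftr_max_ge_1[OF th, of c] by (simp add: mult_le_cancel_left1)
    finally have "rpow b (1 - nu) * (ftr nu (max b th) - ftr nu (max a th))
        \<le> rpow c (1 - nu) * ((ftr nu (max c th) - 1) * exp (b powr nu))"
      using 3 b bc nu_le_1 ftr_max_mono[OF a, of b th]
      by (intro mult_mono rpow_mono rpow_nonneg) auto
    then show ?thesis
      using 3 ftr_max_mono[OF a, of b th] by (simp add: mult_ac)
  qed
qed

lemma ftr_max_diff_le_ftr_exp:
  assumes a: "0 \<le> a" and b: "0 \<le> b" and c: "0 \<le> c" and th: "0 \<le> th"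
    and abc: "a \<le> b + c" and bac: "b \<le> a + c" and "min a b \<le> c"
  shows "\<bar>ftr nu (max a th) - ftr nu (max b th)\<bar> * rpow b (1 - nu)
     \<le> (if a \<le> c \<and> c \<le> b then 2 powr (1 - nu) else 1)
        * rpow c (1 - nu) * (ftr nu (max c th) - 1) * exp (b powr nu)"
  using ftr_max_diff_le_ftr_exp_middle[OF a _ _ bac, of th] 
    ftr_max_diff_le_ftr_exp_outer[OF a b c th abc \<open>min a b \<le> c\<close>] by auto

lemma A_estimates_ftr_max:
  assumes th: "0 \<le> th"
  shows "A_estimates nu (\<lambda>xi :: real ^ 'n. ftr nu (max (norm xi) th))"
  unfolding A_estimates_def
proof (intro conjI allI impI)
  fix xi eta :: "real ^ 'n"
  have a: "0 \<le> norm xi" and b: "0 \<le> norm eta" and c: "0 \<le> norm (xi - eta)"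
    by simp_all
  have abc: "norm xi \<le> norm eta + norm (xi - eta)"
    using norm_triangle_sub[of xi eta] by simp
  have bac: "norm eta \<le> norm xi + norm (xi - eta)"
    using norm_triangle_sub[of eta xi] by (simp add: norm_minus_commute)
  note triangle = a b c th abc bac
  show "ftr nu (max (norm xi) th) \<le> ftr nu (max (norm (xi - eta)) th) * ftr nu (max (norm eta) th)"
    by (rule ftr_max_submult[OF a b c th abc])
  show "\<bar>ftr nu (max (norm xi) th) - ftr nu (max (norm eta) th)\<bar> * rpow (norm eta) (1 - nu)
      \<le> rpow (norm (xi - eta)) (1 - nu) * ftr nu (max (norm (xi - eta)) th) * ftr nu (max (norm eta) th)"
    by (rule ftr_max_diff_le_mult[OF triangle])
  show "ftr nu (max (norm xi) th) \<le> ftr nu (max (norm (xi - eta)) th) * exp (norm eta powr nu)"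
    if "min (norm xi) (norm eta) \<le> norm (xi - eta)"
    by (rule ftr_max_le_mult_exp[OF a b c th abc that])
  show "\<bar>ftr nu (max (norm xi) th) - ftr nu (max (norm eta) th)\<bar> * rpow (norm eta) (1 - nu)
      \<le> (if norm xi \<le> norm (xi - eta) \<and> norm (xi - eta) \<le> norm eta then 2 powr (1 - nu) else 1)
         * rpow (norm (xi - eta)) (1 - nu) * (ftr nu (max (norm (xi - eta)) th) - 1) * exp (norm eta powr nu)"
    if "min (norm xi) (norm eta) \<le> norm (xi - eta)"
    by (rule ftr_max_diff_le_ftr_exp[OF triangle that])
  show "(ftr nu (max (norm eta) th) - ftr nu (max (norm xi) th)) * rpow (norm eta) (1 - nu)
      \<le> norm (xi - eta) * ftr nu (max (norm eta) th)"
    if "norm xi \<le> norm eta"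
    by (rule ftr_max_diff_le_dist[OF a th that bac])
  show "\<bar>ftr nu (max (norm xi) th) - ftr nu (max (norm eta) th)\<bar> * rpow (norm eta) (1 - nu)
      \<le> rpow (norm (xi - eta)) (1 - nu) * (exp (norm (xi - eta) powr nu) - 1) * ftr nu (max (norm eta) th)"
    if "min (norm xi) (norm (xi - eta)) \<le> norm eta"
    by (rule ftr_max_diff_le_exp[OF triangle that])
qed

end

theorem lemmaA2:
  fixes nu :: real
  assumes "0 < nu" and "nu \<le> 1"
  shows "A_estimates nu (ftilde nu :: real ^ 'n \<Rightarrow> real) \<and>
         A_estimates nu (\<lambda>xi :: real ^ 'n. max (ftilde nu xi) (ftr nu 1))"
proof
  have "(ftilde nu :: real ^ 'n \<Rightarrow> real) = (\<lambda>xi. ftr nu (max (norm xi) 0))"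
    by (simp add: fun_eq_iff ftilde_def)
  then show "A_estimates nu (ftilde nu :: real ^ 'n \<Rightarrow> real)"
    using A_estimates_ftr_max[OF assms, of 0] by simp
  have "max (ftr nu r) (ftr nu 1) = ftr nu (max r 1)" if "0 \<le> r" for r
    using ftr_mono[OF assms that, of 1] ftr_mono[OF assms _ , of 1 r] by (auto simp: max_def)
  then have "(\<lambda>xi :: real ^ 'n. max (ftilde nu xi) (ftr nu 1)) = (\<lambda>xi. ftr nu (max (norm xi) 1))"
    by (simp add: fun_eq_iff ftilde_def)
  then show "A_estimates nu (\<lambda>xi :: real ^ 'n. max (ftilde nu xi) (ftr nu 1))"
    using A_estimates_ftr_max[OF assms, of 1] by simp
qed

end
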